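(* Let $\mathcal X=\{1,\dots,N\}$ with $N\ge 2$, let $T\ge1$, let $\mathrm{PWS}$ be a piecewise stationary source for sequences of length $T$ with complexity $C_{\mathrm{PWS}}$, and let $u$ be the uniform distribution on $\mathcal X$. Let $\mathrm{PS}$ be the Probability Smoothing model with fixed parameters $(\alpha,\varepsilon,p)$, where $0<\alpha<1$, $0\le\varepsilon\le1-\frac1N$ and $p$ is a distribution on $\mathcal X$ with $p(x)\ge\frac{\varepsilon}{N-1}$ for all $x$. Then for every sequence $x_{1:T}\in\mathcal X^T$, \[ \ell_{\mathrm{PS}}(x_{1:T})\le \ell_{\mathrm{PWS}}(x_{1:T})+\Big[\frac{\log\frac1{1-\varepsilon}}{\log\frac1\alpha}+N\log\frac1\alpha+(N+1)\log\frac1{1-\varepsilon}\Big]\cdot T+\frac{\log\frac N\varepsilon}{\log\frac1\alpha}\cdot C_{\mathrm{PWS}}+N\cdot D(u\parallel p). \]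
   Context: All logarithms are natural, with $\log\frac10=+\infty$ (so e.g. $\log\frac N\varepsilon=+\infty$ if $\varepsilon=0$). A model maps each finite sequence $x_{1:t}$ over $\mathcal X$ (including the empty sequence) to a distribution on $\mathcal X$; write $M(x;x_{1:t})$ for the probability it gives to $x$. The code length a model $M$ assigns is $\ell_M(x_{1:T})=\sum_{t=1}^T\log\frac1{M(x_t;x_{<t})}$, where $x_{<t}=x_{1:t-1}$. Probability Smoothing with fixed parameters $(\alpha,\varepsilon,p)$: $\mathrm{PS}(\cdot;\text{empty})=p$, and for $t\ge1$, $\mathrm{PS}(x;x_{1:t})=\alpha\,\mathrm{PS}(x;x_{<t})+(1-\alpha)(1-\varepsilon)$ if $x=x_t$, and $=\alpha\,\mathrm{PS}(x;x_{<t})+(1-\alpha)\frac{\varepsilon}{N-1}$ if $x\ne x_t$. A piecewise stationary source (PWS) for length $T$ is given by a partition $\mathcal P=\{[t_1,t_2),[t_2,t_3),\dots,[t_n,t_{n+1})\}$ of $\{1,\dots,T\}$ into integer intervals ($[i,j)=\{i,\dots,j-1\}$, $1=t_1<\dots<t_{n+1}=T+1$) and distributions $\{p_S\}_{S\in\mathcal P}$ on $\mathcal X$; it predicts $p_S$ at time $t$ where $S$ is the segment containing $t$, so $\ell_{\mathrm{PWS}}(x_{1:T})=\sum_{S\in\mathcal P}\sum_{t\in S}\log\frac1{p_S(x_t)}$. The transition set $\mathcal T$ of $\mathcal P$ consists of the triples $(t,A,B)$ with $A=[i,t)\in\mathcal P$ and $B=[t,j)\in\mathcal P$ consecutive segments.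 The complexity is $C_{\mathrm{PWS}}=1+\sum_{(t,A,B)\in\mathcal T}\lVert p_B-p_A\rVert$, where $\lVert p-q\rVert=\sum_x|p(x)-q(x)|$. For distributions $q,r$ with $r$ fully supported, $D(q\parallel r)=\sum_{x:\,q(x)>0}q(x)\log\frac{q(x)}{r(x)}$. *)

theory Defs
  imports "HOL-Analysis.Analysis" "HOL-Library.Extended_Real"
begin

text \<open>Alphabet is {1..N}; sequences are functions nat => nat, x t for t in {1..T}.\<close>

definition lnq :: "real \<Rightarrow> real \<Rightarrow> ereal" where
  "lnq a b = (if b = 0 then \<infinity> else ereal (ln (a / b)))"

definition is_dist :: "nat \<Rightarrow> (nat \<Rightarrow> real) \<Rightarrow> bool" where
  "is_dist N q \<longleftrightarrow> (\<forall>y\<in>{1..N}. q y \<ge> 0) \<and> sum q {1..N} = 1"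

text \<open>Probability Smoothing: PS al eps N p x t y = PS(y; x_{1:t}).\<close>
fun PS :: "real \<Rightarrow> real \<Rightarrow> nat \<Rightarrow> (nat \<Rightarrow> real) \<Rightarrow> (nat \<Rightarrow> nat) \<Rightarrow> nat \<Rightarrow> nat \<Rightarrow> real" where
  "PS al eps N p x 0 y = p y"
| "PS al eps N p x (Suc t) y = al * PS al eps N p x t y +
     (1 - al) * (if y = x (Suc t) then 1 - eps else eps / (real N - 1))"

definition code_len_PS :: "real \<Rightarrow> real \<Rightarrow> nat \<Rightarrow> (nat \<Rightarrow> real) \<Rightarrow> (nat \<Rightarrow> nat) \<Rightarrow> nat \<Rightarrow> ereal" where
  "code_len_PS al eps N p x T = (\<Sum>t\<in>{1..T}. lnq 1 (PS al eps N p x (t - 1) (x t)))"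

text \<open>Piecewise stationary source with n segments [tb i, tb (i+1)), i = 1..n,
  and distribution ps i on segment i.\<close>
definition is_PWS :: "nat \<Rightarrow> nat \<Rightarrow> nat \<Rightarrow> (nat \<Rightarrow> nat) \<Rightarrow> (nat \<Rightarrow> nat \<Rightarrow> real) \<Rightarrow> bool" where
  "is_PWS N T n tb ps \<longleftrightarrow> n \<ge> 1 \<and> tb 1 = 1 \<and> tb (n + 1) = T + 1 \<and>
     (\<forall>i\<in>{1..n}. tb i < tb (i + 1)) \<and> (\<forall>i\<in>{1..n}. is_dist N (ps i))"

definition code_len_PWS :: "nat \<Rightarrow> (nat \<Rightarrow> nat) \<Rightarrow> (nat \<Rightarrow> nat \<Rightarrow> real) \<Rightarrow> (nat \<Rightarrow> nat) \<Rightarrow> ereal" where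
  "code_len_PWS n tb ps x = (\<Sum>i\<in>{1..n}. \<Sum>s\<in>{tb i..<tb (i + 1)}. lnq 1 (ps i (x s)))"

definition complexity_PWS :: "nat \<Rightarrow> nat \<Rightarrow> (nat \<Rightarrow> nat \<Rightarrow> real) \<Rightarrow> real" where
  "complexity_PWS N n ps = 1 + (\<Sum>i\<in>{1..<n}. \<Sum>y\<in>{1..N}. \<bar>ps (i + 1) y - ps i y\<bar>)"

definition KL_unif :: "nat \<Rightarrow> (nat \<Rightarrow> real) \<Rightarrow> ereal" where
  "KL_unif N p = (\<Sum>y\<in>{1..N}. ereal (1 / real N) * lnq (1 / real N) (p y))"

end

theory Submission
  imports Defs
begin

text \<open>
  The regret is paid for by the potential
  \<open>\<Phi>\<^sub>r(t) = \<Sum>\<^sub>y (r(y)/log(1/\<alpha>) + 1) log(1/PS(y; x\<^sub>1\<^sub>:\<^sub>t))\<close>: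
  the cross entropy of a comparator distribution \<open>r\<close> with the current prediction,
  scaled by \<open>1/log(1/\<alpha>)\<close>, plus the log-loss summed over all symbols.
  One smoothing step raises the probability of the observed symbol and lowers every
  other probability by at most the factor \<open>\<alpha>\<close>; an elementary inequality then bounds
  the excess of the loss over \<open>log(1/r(x\<^sub>t))\<close> by the drop of \<open>\<Phi>\<^sub>r\<close> plus a constant.
  Taking \<open>r\<close> to be the source distribution of the current segment, the potential
  telescopes within segments; at a change point from \<open>p\<^sub>A\<close> to \<open>p\<^sub>B\<close> it moves by at
  most \<open>\<parallel>p\<^sub>B - p\<^sub>A\<parallel> log(N/\<epsilon>)/log(1/\<alpha>)\<close>, since every prediction is at least
  \<open>\<epsilon>/N\<close>. At time 0 the potential is at most \<open>log(N/\<epsilon>)/log(1/\<alpha>) + \<Sum>\<^sub>y log(1/p(y))\<close>,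
  and at the end it is at least \<open>N log N\<close> by Gibbs' inequality; the difference of the
  last two terms is \<open>N D(u \<parallel> p)\<close>.
\<close>

lemma smoothing_growth:
  fixes a c w w' :: real
  assumes a0: "0 < a" and a1: "a < 1" and w0: "0 < w" and wc: "w \<le> c"
    and w'_eq: "w' = a * w + (1 - a) * c"
  shows "c \<le> w' * (1 + (ln w' - ln w) / ln (1 / a))"
proof -
  have L0: "ln (1 / a) > 0" using a0 a1 by simp
  have gap: "w' - w = (1 - a) * (c - w)" "c - w' = a * (c - w)"
    using w'_eq by (simp_all add: algebra_simps)
  have "0 \<le> (1 - a) * (c - w)" using a1 wc by simp
  then have w'_pos: "0 < w'" using gap(1) w0 by linarith
  have "ln (w / w') \<le> w / w' - 1" using w0 w'_pos by (intro ln_le_minus_one) simp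
  then have "w' - w \<le> w' * (ln w' - ln w)"
    using w0 w'_pos by (simp add: ln_div field_simps)
  moreover have "a * ln (1 / a) \<le> 1 - a"
    using ln_le_minus_one[of "1 / a"] a0 by (simp add: field_simps)
  then have "a * ln (1 / a) * (c - w) \<le> w' - w"
    unfolding gap(1) using wc by (intro mult_right_mono) auto
  ultimately have "(c - w') * ln (1 / a) \<le> w' * (ln w' - ln w)"
    unfolding gap(2) by (simp add: mult_ac)
  then have "c - w' \<le> w' * (ln w' - ln w) / ln (1 / a)"
    using L0 by (simp add: pos_le_divide_eq)
  then show ?thesis by (simp add: algebra_simps)
qed

lemma smoothing_step_regret:
  fixes a e w r w' :: real
  assumes a0: "0 < a" and a1: "a < 1" and e0: "0 \<le> e" and e1: "e < 1"
    and w0: "0 < w" and w1: "w \<le> 1" and r0: "0 < r" and r1: "r \<le> 1"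
    and w'_eq: "w' = a * w + (1 - a) * (1 - e)"
  shows "- ln w' \<le> - ln r - (1 - r) + r * (ln w' - ln w) / ln (1 / a)
                     + ln (1 / (1 - e)) + ln (1 / (1 - e)) / ln (1 / a)"
proof -
  define L where "L = ln (1 / a)"
  define B where "B = (ln w' - ln w) / L"
  have L0: "0 < L" unfolding L_def using a0 a1 by simp
  have ln_1e: "ln (1 / (1 - e)) = - ln (1 - e)" using e1 by (simp add: ln_div)
  have ln_1e_nonneg: "0 \<le> ln (1 / (1 - e))" using e0 e1 by simp
  show ?thesis
  proof (cases "w \<le> 1 - e")
    case True
    have "w' - w = (1 - a) * (1 - e - w)" using w'_eq by (simp add: algebra_simps)
    moreover have "0 \<le> (1 - a) * (1 - e - w)" using True a1 by simp
    ultimately have "w \<le> w'" by linarith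
    then have B0: "0 \<le> B" unfolding B_def using w0 L0 by simp
    have "1 - e \<le> w' * (1 + B)"
      unfolding B_def L_def using smoothing_growth[OF a0 a1 w0 True w'_eq] .
    moreover have "0 < w'" using \<open>w \<le> w'\<close> w0 by simp
    ultimately have "ln (1 - e) \<le> ln w' + ln (1 + B)"
      using e1 B0 by (simp add: ln_mult_pos[symmetric])
    moreover have "ln r + ln (1 + B) \<le> r * (1 + B) - 1"
      using ln_le_minus_one[of "r * (1 + B)"] r0 B0 by (simp add: ln_mult_pos)
    moreover have "0 \<le> ln (1 / (1 - e)) / L" using ln_1e_nonneg L0 by simp
    moreover have "r * (ln w' - ln w) / L = r * B" unfolding B_def by simp
    ultimately show ?thesis
      unfolding L_def[symmetric] using ln_1e by (simp add: algebra_simps)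
  next
    case False
    have "w' - (1 - e) = a * (w - (1 - e))" using w'_eq by (simp add: algebra_simps)
    moreover have "0 \<le> a * (w - (1 - e))" using False a0 by simp
    ultimately have "1 - e \<le> w'" by linarith
    then have ln_w': "ln (1 - e) \<le> ln w'" using e1 by simp
    have "ln w \<le> 0" using w0 w1 by simp
    then have "- ln (1 / (1 - e)) \<le> ln w' - ln w" using ln_w' ln_1e by simp
    then have "- (r * ln (1 / (1 - e))) \<le> r * (ln w' - ln w)"
      using r0 by (metis minus_mult_right mult_left_mono less_imp_le)
    moreover have "r * ln (1 / (1 - e)) \<le> ln (1 / (1 - e))"
      using mult_left_le_one_le[OF ln_1e_nonneg _ r1] r0 by simp
    ultimately have "- ln (1 / (1 - e)) \<le> r * (ln w' - ln w)" by linarith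
    then have "- ln (1 / (1 - e)) / L \<le> r * (ln w' - ln w) / L"
      using L0 by (metis divide_right_mono less_imp_le minus_divide_left)
    moreover have "r - 1 - ln r \<ge> 0" using ln_le_minus_one[OF r0] by simp
    ultimately show ?thesis
      unfolding L_def[symmetric] using ln_w' ln_1e by linarith
  qed
qed

lemma dist_le_1:
  assumes "is_dist N r" and "y \<in> {1..N}"
  shows "r y \<le> 1"
proof -
  have "r y \<le> sum r {1..N}"
    using assms unfolding is_dist_def by (intro member_le_sum) auto
  then show ?thesis using assms(1) unfolding is_dist_def by simp
qed

lemma sum_mult_ge_remove:
  fixes w d :: "'a \<Rightarrow> real"
  assumes "finite A" and "a \<in> A"
    and "\<And>y. y \<in> A - {a} \<Longrightarrow> 0 \<le> w y" and "\<And>y. y \<in> A - {a} \<Longrightarrow> - L \<le> d y"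
  shows "w a * d a - L * (\<Sum>y\<in>A - {a}. w y) \<le> (\<Sum>y\<in>A. w y * d y)"
proof -
  have "(\<Sum>y\<in>A - {a}. w y * - L) \<le> (\<Sum>y\<in>A - {a}. w y * d y)"
    using assms(3,4) by (intro sum_mono mult_left_mono) auto
  moreover have "(\<Sum>y\<in>A - {a}. w y * - L) = - L * (\<Sum>y\<in>A - {a}. w y)"
    by (simp add: sum_distrib_left sum_negf mult.commute)
  ultimately show ?thesis
    using assms(1,2) by (simp add: sum.remove)
qed

lemma sum_telescope_shifted:
  fixes f :: "nat \<Rightarrow> 'a::ab_group_add"
  assumes "1 \<le> a" and "a \<le> b"
  shows "(\<Sum>t = a..<b. f (t - 1) - f t) = f (a - 1) - f (b - 1)"
  using sum_Suc_diff'[OF assms(2), of "\<lambda>t. - f (t - 1)"] assms by simp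

lemma sum_telescope_switching:
  fixes G :: "nat \<Rightarrow> nat \<Rightarrow> 'a::ab_group_add"
  assumes "1 \<le> n"
  shows "(\<Sum>i = 1..n. G i (a i) - G i (a (i + 1)))
       = G 1 (a 1) - G n (a (n + 1)) + (\<Sum>i = 1..<n. G (i + 1) (a (i + 1)) - G i (a (i + 1)))"
  using assms
proof (induction n rule: dec_induct)
  case (step n)
  then show ?case by (simp add: sum.atLeastLessThan_Suc)
qed simp

lemma sum_concat_intervals:
  fixes tb :: "nat \<Rightarrow> nat"
  assumes "mono_on {1..n + 1} tb"
  shows "(\<Sum>i = 1..n. \<Sum>s = tb i..<tb (i + 1). h s) = (\<Sum>s = tb 1..<tb (n + 1). h s)"
  using assms
proof (induction n)
  case (Suc n)
  have "mono_on {1..n + 1} tb" using Suc.prems by (rule mono_on_subset) auto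
  moreover have "tb 1 \<le> tb (n + 1)" "tb (n + 1) \<le> tb (n + 2)"
    using Suc.prems by (auto intro: mono_onD)
  ultimately show ?case
    using Suc.IH by (simp add: sum.atLeastLessThan_concat)
qed simp

lemma PWS_mono:
  assumes "is_PWS N T n tb ps"
  shows "mono_on {1..n + 1} tb"
proof (rule mono_onI)
  fix i j assume "i \<in> {1..n + 1}" "j \<in> {1..n + 1}" "i \<le> j"
  from \<open>i \<le> j\<close> \<open>i \<in> {1..n + 1}\<close> \<open>j \<in> {1..n + 1}\<close> show "tb i \<le> tb j"
  proof (induction j rule: dec_induct)
    case (step k)
    then have "tb k < tb (k + 1)" using assms unfolding is_PWS_def by auto
    then show ?case using step by simp
  qed simp
qed

lemma PWS_segment_bounds:
  assumes "is_PWS N T n tb ps" and "i \<in> {1..n}"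
  shows "1 \<le> tb i" and "tb i \<le> tb (i + 1)" and "tb (i + 1) \<le> T + 1"
proof -
  have "tb 1 \<le> tb i" "tb i \<le> tb (i + 1)" "tb (i + 1) \<le> tb (n + 1)"
    using PWS_mono[OF assms(1)] assms(2) by (auto intro: mono_onD)
  then show "1 \<le> tb i" "tb i \<le> tb (i + 1)" "tb (i + 1) \<le> T + 1"
    using assms(1) unfolding is_PWS_def by auto
qed

lemma sum_neg_ln_dist_ge:
  assumes q: "is_dist N q" and q_pos: "\<And>y. y \<in> {1..N} \<Longrightarrow> 0 < q y"
  shows "real N * ln (real N) \<le> (\<Sum>y\<in>{1..N}. - ln (q y))"
proof (cases "N = 0")
  case False
  then have N_pos: "0 < real N" by simp
  have "(\<Sum>y\<in>{1..N}. ln (real N * q y)) \<le> (\<Sum>y\<in>{1..N}. real N * q y - 1)"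
    using q_pos N_pos by (intro sum_mono ln_le_minus_one) auto
  also have "\<dots> = 0"
    using q unfolding is_dist_def by (simp add: sum_subtractf sum_distrib_left[symmetric])
  finally show ?thesis
    using q_pos N_pos by (simp add: ln_mult_pos sum.distrib sum_negf)
qed simp

locale probability_smoothing =
  fixes N T :: nat and al eps :: real and p :: "nat \<Rightarrow> real" and x :: "nat \<Rightarrow> nat"
  assumes N_ge_2: "N \<ge> 2" and al_pos: "0 < al" and al_less_1: "al < 1"
    and eps_pos: "0 < eps" and eps_le: "eps \<le> 1 - 1 / real N"
    and p_dist: "is_dist N p" and p_ge: "\<forall>y\<in>{1..N}. eps / (real N - 1) \<le> p y"
    and x_range: "\<forall>t\<in>{1..T}. x t \<in> {1..N}"
begin

abbreviation pred :: "nat \<Rightarrow> nat \<Rightarrow> real" where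
  "pred t y \<equiv> PS al eps N p x t y"

definition L_al :: real where "L_al = ln (1 / al)"

definition L_eps :: real where "L_eps = ln (1 / (1 - eps))"

definition step_regret :: real where
  "step_regret = (real N - 1) * L_al + L_eps + L_eps / L_al"

definition potential :: "(nat \<Rightarrow> real) \<Rightarrow> nat \<Rightarrow> real" where
  "potential r t = (\<Sum>y\<in>{1..N}. (r y / L_al + 1) * - ln (pred t y))"

lemma N_minus_1_pos: "0 < real N - 1"
  using N_ge_2 by simp

lemma eps_less_1: "eps < 1"
proof -
  have "0 < 1 / real N" using N_ge_2 by simp
  then show ?thesis using eps_le by linarith
qed

lemma eps_share_le: "eps / (real N - 1) \<le> 1 - eps"
proof -
  have "eps * real N \<le> real N - 1" using eps_le N_ge_2 by (simp add: field_simps)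
  then have "eps \<le> (1 - eps) * (real N - 1)" by (simp add: algebra_simps)
  then show ?thesis using N_minus_1_pos by (simp add: divide_le_eq)
qed

lemma L_al_pos: "0 < L_al"
  unfolding L_al_def using al_pos al_less_1 by simp

lemma L_eps_nonneg: "0 \<le> L_eps"
  unfolding L_eps_def using eps_pos eps_less_1 by simp

lemma pred_ge: "y \<in> {1..N} \<Longrightarrow> eps / (real N - 1) \<le> pred t y"
proof (induction t)
  case (Suc t)
  let ?c = "eps / (real N - 1)"
  let ?target = "if y = x (Suc t) then 1 - eps else ?c"
  have "al * ?c \<le> al * pred t y"
    using Suc al_pos by (intro mult_left_mono) auto
  moreover have "(1 - al) * ?c \<le> (1 - al) * ?target"
    using eps_share_le al_less_1 by (intro mult_left_mono) auto
  moreover have "pred (Suc t) y = al * pred t y + (1 - al) * ?target" by simp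
  moreover have "?c = al * ?c + (1 - al) * ?c" by (subst distrib_right[symmetric]) simp
  ultimately show ?case by linarith
qed (use p_ge in simp)

lemma pred_pos: "y \<in> {1..N} \<Longrightarrow> 0 < pred t y"
  using pred_ge[of y t] divide_pos_pos[OF eps_pos N_minus_1_pos] by linarith

lemma smoothing_target_sum:
  assumes "a \<in> {1..N}"
  shows "(\<Sum>y\<in>{1..N}. if y = a then 1 - eps else eps / (real N - 1)) = 1"
proof -
  have "(\<Sum>y\<in>{1..N} - {a}. if y = a then 1 - eps else eps / (real N - 1))
      = real (N - 1) * (eps / (real N - 1))"
    using assms by simp
  also have "\<dots> = eps" using N_ge_2 N_minus_1_pos by (simp add: of_nat_diff)
  finally show ?thesis using assms by (simp add: sum.remove)
qed

lemma pred_sum: "t \<le> T \<Longrightarrow> (\<Sum>y\<in>{1..N}. pred t y) = 1"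
proof (induction t)
  case (Suc t)
  then have "x (Suc t) \<in> {1..N}" using x_range by simp
  then show ?case
    using Suc smoothing_target_sum by (simp add: sum.distrib sum_distrib_left[symmetric])
qed (use p_dist in \<open>simp add: is_dist_def\<close>)

lemma pred_dist: "t \<le> T \<Longrightarrow> is_dist N (pred t)"
  unfolding is_dist_def using pred_pos pred_sum less_imp_le by blast

lemma pred_le_1: "t \<le> T \<Longrightarrow> y \<in> {1..N} \<Longrightarrow> pred t y \<le> 1"
  using dist_le_1 pred_dist by blast

lemma neg_ln_pred_nonneg: "t \<le> T \<Longrightarrow> y \<in> {1..N} \<Longrightarrow> 0 \<le> - ln (pred t y)"
  using pred_le_1[of t y] pred_pos[of y t] by simp

lemma neg_ln_pred_le: "y \<in> {1..N} \<Longrightarrow> - ln (pred t y) \<le> ln (real N / eps)"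
proof -
  assume y: "y \<in> {1..N}"
  have "eps / real N \<le> eps / (real N - 1)"
    using eps_pos N_minus_1_pos by (intro divide_left_mono) auto
  also have "\<dots> \<le> pred t y" using pred_ge[OF y] .
  finally have "ln (eps / real N) \<le> ln (pred t y)"
    using eps_pos N_ge_2 by (intro ln_mono) auto
  moreover have "ln (eps / real N) = - ln (real N / eps)"
    using eps_pos N_ge_2 by (simp add: ln_div)
  ultimately show ?thesis by linarith
qed

lemma ln_pred_Suc_ge:
  assumes "y \<in> {1..N}" and "y \<noteq> x (Suc t)"
  shows "- L_al \<le> ln (pred (Suc t) y) - ln (pred t y)"
proof -
  have "0 \<le> (1 - al) * (eps / (real N - 1))"
    using al_less_1 eps_pos N_minus_1_pos by simp
  then have "al * pred t y \<le> pred (Suc t) y" using assms(2) by simp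
  then have "ln (al * pred t y) \<le> ln (pred (Suc t) y)"
    using al_pos pred_pos[OF assms(1)] by (intro ln_mono) auto
  moreover have "ln (al * pred t y) = - L_al + ln (pred t y)"
    unfolding L_al_def using al_pos pred_pos[OF assms(1)] by (simp add: ln_mult_pos ln_div)
  ultimately show ?thesis by linarith
qed

lemma potential_step:
  assumes t: "t < T" and r: "is_dist N r" and r_pos: "0 < r (x (Suc t))"
  shows "- ln (pred t (x (Suc t)))
           \<le> - ln (r (x (Suc t))) + potential r t - potential r (Suc t) + step_regret"
proof -
  define a where "a = x (Suc t)"
  define d where "d y = ln (pred (Suc t) y) - ln (pred t y)" for y
  have a: "a \<in> {1..N}" unfolding a_def using x_range t by simp
  have r_nonneg: "\<And>y. y \<in> {1..N} \<Longrightarrow> 0 \<le> r y" using r unfolding is_dist_def by simp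
  have "potential r t - potential r (Suc t) = (\<Sum>y\<in>{1..N}. (r y / L_al + 1) * d y)"
    unfolding potential_def d_def by (simp add: sum_subtractf[symmetric] algebra_simps)
  moreover have "(r a / L_al + 1) * d a - L_al * (\<Sum>y\<in>{1..N} - {a}. r y / L_al + 1)
      \<le> (\<Sum>y\<in>{1..N}. (r y / L_al + 1) * d y)"
    using a r_nonneg L_al_pos ln_pred_Suc_ge unfolding d_def a_def
    by (intro sum_mult_ge_remove) auto
  moreover have "L_al * (\<Sum>y\<in>{1..N} - {a}. r y / L_al + 1) = (1 - r a) + (real N - 1) * L_al"
  proof -
    have "(\<Sum>y\<in>{1..N} - {a}. r y) = 1 - r a"
      using r a unfolding is_dist_def by (simp add: sum.remove)
    then show ?thesis
      using a N_ge_2 L_al_pos by (simp add: sum.distrib sum_divide_distrib[symmetric] of_nat_diff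
                                    algebra_simps)
  qed
  moreover have "- ln (pred (Suc t) a) \<le> - ln (r a) - (1 - r a) + r a * d a / L_al + L_eps + L_eps / L_al"
    unfolding d_def L_al_def L_eps_def
  proof (rule smoothing_step_regret[OF al_pos al_less_1 _ eps_less_1])
    show "pred (Suc t) a = al * pred t a + (1 - al) * (1 - eps)" unfolding a_def by simp
  qed (use eps_pos a r_pos pred_pos t pred_le_1 dist_le_1[OF r] in \<open>auto simp: a_def\<close>)
  moreover have "(r a / L_al + 1) * d a = r a * d a / L_al + d a" by (simp add: algebra_simps)
  moreover have "- ln (pred t a) = - ln (pred (Suc t) a) + d a" unfolding d_def by simp
  ultimately show ?thesis unfolding a_def[symmetric] step_regret_def by linarith
qed

lemma potential_segment:
  assumes ab: "1 \<le> a" "a \<le> b" and b: "b \<le> T + 1" and r: "is_dist N r"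
    and r_pos: "\<forall>s\<in>{a..<b}. 0 < r (x s)"
  shows "(\<Sum>s = a..<b. - ln (pred (s - 1) (x s)))
     \<le> (\<Sum>s = a..<b. - ln (r (x s))) + step_regret * real (b - a)
        + (potential r (a - 1) - potential r (b - 1))"
proof -
  have "(\<Sum>s = a..<b. - ln (pred (s - 1) (x s)))
     \<le> (\<Sum>s = a..<b. - ln (r (x s)) + (potential r (s - 1) - potential r s) + step_regret)"
  proof (rule sum_mono)
    fix s assume s: "s \<in> {a..<b}"
    then have "s - 1 < T" "Suc (s - 1) = s" using ab b by auto
    then show "- ln (pred (s - 1) (x s))
             \<le> - ln (r (x s)) + (potential r (s - 1) - potential r s) + step_regret"
      using potential_step[OF _ r, of "s - 1"] r_pos s by simp
  qed
  also have "\<dots> = (\<Sum>s = a..<b. - ln (r (x s))) + step_regret * real (b - a)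
                    + (\<Sum>s = a..<b. potential r (s - 1) - potential r s)"
    unfolding sum.distrib by (simp add: mult.commute)
  finally show ?thesis
    using sum_telescope_shifted[OF ab, of "potential r"] by simp
qed

lemma potential_switch:
  assumes "t \<le> T"
  shows "potential r2 t - potential r1 t
       \<le> (\<Sum>y\<in>{1..N}. \<bar>r2 y - r1 y\<bar>) * ln (real N / eps) / L_al"
proof -
  have "potential r2 t - potential r1 t = (\<Sum>y\<in>{1..N}. (r2 y - r1 y) / L_al * - ln (pred t y))"
    unfolding potential_def by (simp add: sum_subtractf[symmetric] algebra_simps diff_divide_distrib)
  also have "\<dots> \<le> (\<Sum>y\<in>{1..N}. \<bar>r2 y - r1 y\<bar> / L_al * ln (real N / eps))"
  proof (rule sum_mono)
    fix y assume y: "y \<in> {1..N}"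
    have "(r2 y - r1 y) / L_al * - ln (pred t y) \<le> \<bar>r2 y - r1 y\<bar> / L_al * - ln (pred t y)"
      using neg_ln_pred_nonneg[OF assms y] L_al_pos
      by (intro mult_right_mono divide_right_mono) auto
    also have "\<dots> \<le> \<bar>r2 y - r1 y\<bar> / L_al * ln (real N / eps)"
      using neg_ln_pred_le[OF y] L_al_pos by (intro mult_left_mono) auto
    finally show "(r2 y - r1 y) / L_al * - ln (pred t y) \<le> \<bar>r2 y - r1 y\<bar> / L_al * ln (real N / eps)" .
  qed
  finally show ?thesis by (simp add: sum_distrib_right sum_divide_distrib)
qed

lemma potential_initial:
  assumes r: "is_dist N r"
  shows "potential r 0 \<le> ln (real N / eps) / L_al + (\<Sum>y\<in>{1..N}. - ln (p y))"
proof -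
  have "(\<Sum>y\<in>{1..N}. r y / L_al * - ln (pred 0 y)) \<le> (\<Sum>y\<in>{1..N}. r y / L_al * ln (real N / eps))"
    using r neg_ln_pred_le[of _ 0] L_al_pos unfolding is_dist_def
    by (intro sum_mono mult_left_mono) auto
  also have "\<dots> = ln (real N / eps) / L_al"
    using r unfolding is_dist_def by (simp add: sum_distrib_right[symmetric] sum_divide_distrib[symmetric])
  moreover have "potential r 0
      = (\<Sum>y\<in>{1..N}. r y / L_al * - ln (pred 0 y)) + (\<Sum>y\<in>{1..N}. - ln (p y))"
    unfolding potential_def sum.distrib[symmetric] by (simp add: distrib_right)
  ultimately show ?thesis by linarith
qed

lemma potential_final:
  assumes t: "t \<le> T" and r: "is_dist N r"
  shows "real N * ln (real N) \<le> potential r t"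
proof -
  have "real N * ln (real N) \<le> (\<Sum>y\<in>{1..N}. - ln (pred t y))"
    using sum_neg_ln_dist_ge[OF pred_dist[OF t]] pred_pos by blast
  also have "\<dots> \<le> potential r t"
    unfolding potential_def using r neg_ln_pred_nonneg[OF t] L_al_pos unfolding is_dist_def
    by (intro sum_mono) (simp add: distrib_right divide_nonpos_pos mult_nonneg_nonpos)
  finally show ?thesis .
qed

lemma loss_le_potential_drops:
  assumes pws: "is_PWS N T n tb ps"
    and ps_pos: "\<forall>i\<in>{1..n}. \<forall>s\<in>{tb i..<tb (i + 1)}. 0 < ps i (x s)"
  shows "(\<Sum>t = 1..T. - ln (pred (t - 1) (x t)))
     \<le> (\<Sum>i = 1..n. \<Sum>s = tb i..<tb (i + 1). - ln (ps i (x s))) + step_regret * real T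
        + (\<Sum>i = 1..n. potential (ps i) (tb i - 1) - potential (ps i) (tb (i + 1) - 1))"
proof -
  have tb_1: "tb 1 = 1" and tb_n: "tb (n + 1) = T + 1"
    and ps: "\<And>i. i \<in> {1..n} \<Longrightarrow> is_dist N (ps i)"
    using pws unfolding is_PWS_def by auto
  have mono: "mono_on {1..n + 1} tb" using PWS_mono[OF pws] .
  have "(\<Sum>t = 1..T. - ln (pred (t - 1) (x t)))
      = (\<Sum>i = 1..n. \<Sum>s = tb i..<tb (i + 1). - ln (pred (s - 1) (x s)))"
    using sum_concat_intervals[OF mono, of "\<lambda>s. - ln (pred (s - 1) (x s))"] tb_1 tb_n
    by (simp add: atLeastLessThanSuc_atLeastAtMost)
  also have "\<dots> \<le> (\<Sum>i = 1..n. (\<Sum>s = tb i..<tb (i + 1). - ln (ps i (x s)))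
                 + step_regret * real (tb (i + 1) - tb i)
                 + (potential (ps i) (tb i - 1) - potential (ps i) (tb (i + 1) - 1)))"
    using potential_segment PWS_segment_bounds[OF pws] ps ps_pos by (intro sum_mono) blast
  also have "\<dots> = (\<Sum>i = 1..n. \<Sum>s = tb i..<tb (i + 1). - ln (ps i (x s)))
                 + step_regret * (\<Sum>i = 1..n. real (tb (i + 1) - tb i))
                 + (\<Sum>i = 1..n. potential (ps i) (tb i - 1) - potential (ps i) (tb (i + 1) - 1))"
    by (simp add: sum.distrib sum_distrib_left)
  finally show ?thesis
    using sum_concat_intervals[OF mono, of "\<lambda>_. 1 :: real"] tb_1 tb_n by simp
qed

lemma potential_drops_le:
  assumes pws: "is_PWS N T n tb ps"
  shows "(\<Sum>i = 1..n. potential (ps i) (tb i - 1) - potential (ps i) (tb (i + 1) - 1))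
     \<le> ln (real N / eps) * complexity_PWS N n ps / L_al
        + ((\<Sum>y\<in>{1..N}. - ln (p y)) - real N * ln (real N))"
proof -
  define c where "c = ln (real N / eps)"
  define D where "D i = (\<Sum>y\<in>{1..N}. \<bar>ps (i + 1) y - ps i y\<bar>)" for i
  define G where "G i t = potential (ps i) t" for i t
  have n: "1 \<le> n" and tb_1: "tb 1 = 1" and tb_n: "tb (n + 1) = T + 1"
    and ps: "\<And>i. i \<in> {1..n} \<Longrightarrow> is_dist N (ps i)"
    using pws unfolding is_PWS_def by auto
  have "(\<Sum>i = 1..n. G i (tb i - 1) - G i (tb (i + 1) - 1))
      = G 1 0 - G n T + (\<Sum>i = 1..<n. G (i + 1) (tb (i + 1) - 1) - G i (tb (i + 1) - 1))"
    using sum_telescope_switching[OF n, of G "\<lambda>i. tb i - 1"] tb_1 tb_n by simp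
  also have "\<dots> \<le> (c / L_al + (\<Sum>y\<in>{1..N}. - ln (p y))) - real N * ln (real N)
                 + (\<Sum>i = 1..<n. D i * c / L_al)"
  proof (intro add_mono diff_mono sum_mono)
    show "G 1 0 \<le> c / L_al + (\<Sum>y\<in>{1..N}. - ln (p y))"
      unfolding G_def c_def using potential_initial ps n by simp
    show "real N * ln (real N) \<le> G n T"
      unfolding G_def using potential_final ps n by simp
    fix i assume "i \<in> {1..<n}"
    then show "G (i + 1) (tb (i + 1) - 1) - G i (tb (i + 1) - 1) \<le> D i * c / L_al"
      unfolding G_def D_def c_def using potential_switch PWS_segment_bounds[OF pws, of i] by simp
  qed
  also have "\<dots> = c * complexity_PWS N n ps / L_al + ((\<Sum>y\<in>{1..N}. - ln (p y)) - real N * ln (real N))"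
  proof -
    have "complexity_PWS N n ps = 1 + (\<Sum>i = 1..<n. D i)"
      unfolding complexity_PWS_def D_def ..
    moreover have "(\<Sum>i = 1..<n. D i * c / L_al) = c * (\<Sum>i = 1..<n. D i) / L_al"
      by (simp add: sum_divide_distrib[symmetric] sum_distrib_left mult.commute)
    ultimately show ?thesis by (simp add: distrib_left add_divide_distrib)
  qed
  finally show ?thesis unfolding G_def c_def .
qed

lemma step_regret_le:
  "step_regret \<le> L_eps / L_al + real N * L_al + (real N + 1) * L_eps"
  unfolding step_regret_def using L_al_pos L_eps_nonneg by (simp add: algebra_simps)

lemma code_len_PS_eq:
  "code_len_PS al eps N p x T = ereal (\<Sum>t = 1..T. - ln (pred (t - 1) (x t)))"
proof -
  have "lnq 1 (pred (t - 1) (x t)) = ereal (- ln (pred (t - 1) (x t)))" if "t \<in> {1..T}" for t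
    using that x_range pred_pos[of "x t" "t - 1"] by (simp add: lnq_def ln_div)
  then show ?thesis unfolding code_len_PS_def by simp
qed

lemma KL_unif_eq:
  "ereal (real N) * KL_unif N p = ereal ((\<Sum>y\<in>{1..N}. - ln (p y)) - real N * ln (real N))"
proof -
  have "lnq (1 / real N) (p y) = ereal (- ln (p y) - ln (real N))" if "y \<in> {1..N}" for y
    using that pred_pos[of y 0] N_ge_2 by (simp add: lnq_def ln_div ln_mult_pos)
  then have "ereal (real N) * KL_unif N p
      = ereal (real N * (\<Sum>y\<in>{1..N}. (- ln (p y) - ln (real N)) / real N))"
    unfolding KL_unif_def by simp
  also have "\<dots> = ereal ((\<Sum>y\<in>{1..N}. - ln (p y)) - real N * ln (real N))"
    using N_ge_2 by (simp add: sum_divide_distrib[symmetric] sum_subtractf)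
  finally show ?thesis .
qed

end

lemma code_len_PWS_eq:
  assumes "\<forall>i\<in>{1..n}. \<forall>s\<in>{tb i..<tb (i + 1)}. 0 < ps i (x s)"
  shows "code_len_PWS n tb ps x = ereal (\<Sum>i = 1..n. \<Sum>s = tb i..<tb (i + 1). - ln (ps i (x s)))"
proof -
  have "lnq 1 (ps i (x s)) = ereal (- ln (ps i (x s)))"
    if "i \<in> {1..n}" "s \<in> {tb i..<tb (i + 1)}" for i s
  proof -
    have "0 < ps i (x s)" using assms that by blast
    then show ?thesis by (simp add: lnq_def ln_div)
  qed
  then show ?thesis unfolding code_len_PWS_def by simp
qed

lemma code_len_PWS_infinite:
  assumes pws: "is_PWS N T n tb ps" and x: "\<forall>t\<in>{1..T}. x t \<in> {1..N}"
    and i: "i \<in> {1..n}" and s: "s \<in> {tb i..<tb (i + 1)}" and zero: "\<not> 0 < ps i (x s)"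
  shows "code_len_PWS n tb ps x = \<infinity>"
proof -
  have "x s \<in> {1..N}" using PWS_segment_bounds[OF pws i] s x by auto
  then have "ps i (x s) = 0" using pws i zero unfolding is_PWS_def is_dist_def by force
  then have "(\<Sum>s\<in>{tb i..<tb (i + 1)}. lnq 1 (ps i (x s))) = \<infinity>"
    using s by (auto simp: lnq_def sum_Pinfty)
  then show ?thesis unfolding code_len_PWS_def using i by (auto simp: sum_Pinfty)
qed

theorem theorem1:
  fixes N T n :: nat and tb :: "nat \<Rightarrow> nat" and ps :: "nat \<Rightarrow> nat \<Rightarrow> real"
    and al eps :: real and p :: "nat \<Rightarrow> real" and x :: "nat \<Rightarrow> nat"
  assumes "N \<ge> 2" and "T \<ge> 1"
    and "is_PWS N T n tb ps"
    and "0 < al" and "al < 1"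
    and "0 \<le> eps" and "eps \<le> 1 - 1 / real N"
    and "is_dist N p" and "\<forall>y\<in>{1..N}. p y \<ge> eps / (real N - 1)"
    and "\<forall>t\<in>{1..T}. x t \<in> {1..N}"
  shows "code_len_PS al eps N p x T \<le>
     code_len_PWS n tb ps x
     + ereal ((ln (1 / (1 - eps)) / ln (1 / al) + real N * ln (1 / al)
              + (real N + 1) * ln (1 / (1 - eps))) * real T)
     + lnq (real N) eps * ereal (complexity_PWS N n ps / ln (1 / al))
     + ereal (real N) * KL_unif N p"
proof (cases "eps = 0")
  case True
  \<comment> \<open>then the right-hand side is infinite, as it is when the source gives probability 0
    to an observed symbol\<close>
  have "1 \<le> complexity_PWS N n ps" unfolding complexity_PWS_def by (simp add: sum_nonneg)
  moreover have "0 < ln (1 / al)" using assms(4,5) by simp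
  ultimately have infinite: "lnq (real N) eps * ereal (complexity_PWS N n ps / ln (1 / al)) = \<infinity>"
    using True by (simp add: lnq_def)
  show ?thesis unfolding infinite by simp
next
  case False
  show ?thesis
  proof (cases "\<forall>i\<in>{1..n}. \<forall>s\<in>{tb i..<tb (i + 1)}. 0 < ps i (x s)")
    case ps_pos: True
    interpret probability_smoothing N T al eps p x
      using assms False by unfold_locales auto
    have "lnq (real N) eps = ereal (ln (real N / eps))" using False by (simp add: lnq_def)
    moreover have "step_regret * real T \<le> (L_eps / L_al + real N * L_al + (real N + 1) * L_eps) * real T"
      using step_regret_le by (simp add: mult_right_mono)
    ultimately show ?thesis
      using loss_le_potential_drops[OF assms(3) ps_pos] potential_drops_le[OF assms(3)]
      unfolding code_len_PS_eq code_len_PWS_eq[of n tb ps x, OF ps_pos] KL_unif_eq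
        L_al_def[symmetric] L_eps_def[symmetric]
      by simp
  next
    case False
    then show ?thesis using code_len_PWS_infinite[OF assms(3,10)] by auto
  qed
qed

end
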